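(* Let $N\ge 2$ be an integer. For $k\in\mathbb{Z}$ let $D_k$ be the column vector of length $N$ whose $i$-th entry ($i=1,\dots,N$, from the top) is $p_{2(N-i)+1}(y,q^kz)$, and let $D'_k$ be the column vector whose $i$-th entry is $q^{2(N-i)+1}p_{2(N-i)+1}(y/q,q^kz)$. Then $$\det[D_{N-1},D_{N-2},\dots,D_1,D_0]=(q-1)^{\frac{N(N-1)}2}z^{\frac{N(N-1)}2}q^{\frac{(N-2)(N-1)N}6}\phi_N(y,z),$$ $$\det[D_{N-1},\dots,D_2,D_1,D'_0]=(-1)^{N-1}(q-1)^{\frac{N(N-1)}2}z^{\frac{(N-1)(N-2)}2}q^{\frac{N(N^2+5)}6}\phi_N(y/q,z),$$ $$\det[D_{N-1},\dots,D_2,D_1,D'_1]=(-1)^{N-1}(q-1)^{\frac{N(N-1)}2}z^{\frac{(N-1)(N-2)}2}q^{\frac{N(N^2+5)}6}(1+qz)\,\phi_N(y/q,z).$$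
   Context: $q$ is a fixed nonzero complex constant that is not a root of unity; $y,z$ are variables. For $k\in\mathbb{Z}$ the polynomials $p_k(y,z)$ are defined by the generating function $\sum_{n\ge 0}p_n(y,z)t^n=\frac{(-(1-q)t;q)_\infty}{((1-q)yt;q)_\infty((1-q)zt;q)_\infty}$, with $(a;q)_\infty=\prod_{i\ge0}(1-aq^i)$, and $p_k=0$ for $k<0$; equivalently $p_n(y,z)=(1-q)^n\sum_{a+b+c=n}\frac{y^a z^b q^{c(c-1)/2}}{(q;q)_a(q;q)_b(q;q)_c}$ with $(q;q)_m=\prod_{j=1}^m(1-q^j)$. For $N>0$, $\phi_N(y,z)=\det\big(p_{N-2i+j+1}(y,z)\big)_{i,j=1}^N$. *)

theory Defs
  imports Complex_Main "Jordan_Normal_Form.Determinant"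
begin

definition qpoch :: "complex \<Rightarrow> nat \<Rightarrow> complex" where
  "qpoch q m = (\<Prod>j=1..m. (1 - q ^ j))"

definition pnat :: "complex \<Rightarrow> nat \<Rightarrow> complex \<Rightarrow> complex \<Rightarrow> complex" where
  "pnat q n y z = (1 - q) ^ n *
     (\<Sum>a\<le>n. \<Sum>b\<le>n - a.
        y ^ a * z ^ b * q ^ ((n - a - b) * (n - a - b - 1) div 2)
        / (qpoch q a * qpoch q b * qpoch q (n - a - b)))"

definition p :: "complex \<Rightarrow> int \<Rightarrow> complex \<Rightarrow> complex \<Rightarrow> complex" where
  "p q k y z = (if k < 0 then 0 else pnat q (nat k) y z)"

text \<open>phi_N(y,z) = det (p_{N-2i+j+1}(y,z))_{i,j=1}^N; with 0-based indices i', j'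
  the entry is p_{N - 2 i' + j'}.\<close>
definition phi :: "complex \<Rightarrow> nat \<Rightarrow> complex \<Rightarrow> complex \<Rightarrow> complex" where
  "phi q N y z = det (mat N N (\<lambda>(i, j). p q (int N - 2 * int i + int j) y z))"

end

theory Submission
  imports Defs "HOL-Computational_Algebra.Formal_Power_Series"
begin

text \<open>
  Let \<open>P(y, z; t) = \<Sum>\<^sub>n p\<^sub>n(y, z) t\<^sup>n\<close>, a product of three q-exponentials. Their
  functional equations give \<open>P(y, q z; t) = P(y, z; t) (1 + (q - 1) z t)\<close> and
  \<open>P(q y, q z; t) = P(y, z; q t) (1 + (1 - q) t)\<close>. Hence, up to powers of q scaling the rows,
  column \<open>c\<close> of each of the first two matrices lists the coefficients of degrees
  \<open>2 (N - i) + 1\<close> of \<open>P(y, z) Q\<^sub>c\<close> resp. \<open>P(y/q, z) Q\<^sub>c\<close>, where \<open>Q\<^sub>c\<close> is a polynomial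
  of degree at most \<open>N - 1 - c\<close>. Such a matrix is the matrix defining \<open>\<phi>\<^sub>N\<close> times a
  triangular matrix of coefficients of the \<open>Q\<^sub>c\<close>, so its determinant is \<open>\<phi>\<^sub>N\<close> times the
  product of the coefficients of degree \<open>N - 1 - c\<close> of the \<open>Q\<^sub>c\<close>. The third determinant
  reduces to the second by a column operation, thanks to a contiguous relation between
  \<open>p\<^sub>n(y/q, q z)\<close>, \<open>p\<^sub>n(y/q, z)\<close> and \<open>p\<^sub>n(y, q z)\<close>.
\<close>

definition fps_coeff :: "'a::zero fps \<Rightarrow> int \<Rightarrow> 'a" where
  "fps_coeff F m = (if m < 0 then 0 else fps_nth F (nat m))"

lemma fps_nth_mult_linear:
  fixes F :: "'a::comm_ring_1 fps"
  shows "fps_nth (F * (1 + fps_const b * fps_X)) j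
       = fps_nth F j + (if j = 0 then 0 else b * fps_nth F (j - 1))"
proof -
  have "F * (1 + fps_const b * fps_X) = F + fps_const b * (fps_X * F)"
    by (simp add: distrib_left ac_simps)
  then show ?thesis by simp
qed

lemma fps_nth_prod_linear_factors_above:
  fixes c :: "nat \<Rightarrow> 'a::comm_ring_1"
  shows "m < j \<Longrightarrow> fps_nth (\<Prod>i<m. 1 + fps_const (c i) * fps_X) j = 0"
  by (induction m arbitrary: j) (simp_all add: fps_nth_mult_linear)

lemma fps_nth_prod_linear_factors_top:
  fixes c :: "nat \<Rightarrow> 'a::comm_ring_1"
  shows "fps_nth (\<Prod>i<m. 1 + fps_const (c i) * fps_X) m = (\<Prod>i<m. c i)"
proof (induction m)
  case (Suc m)
  then have "fps_nth (\<Prod>i<Suc m. 1 + fps_const (c i) * fps_X) (Suc m) = c m * (\<Prod>i<m. c i)"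
    by (simp add: fps_nth_mult_linear fps_nth_prod_linear_factors_above)
  then show ?case by (simp add: mult.commute)
qed simp

lemma fps_compose_linear_factor:
  fixes c :: "'a::comm_ring_1"
  shows "(1 + fps_const b * fps_X) oo (fps_const c * fps_X) = 1 + fps_const (c * b) * fps_X"
proof -
  have "(fps_const b * fps_X) oo (fps_const c * fps_X) = fps_const b * (fps_const c * fps_X)"
    by (simp flip: fps_const_mult_apply_left)
  also have "\<dots> = fps_const (c * b) * fps_X"
    by (simp add: mult.commute mult.left_commute)
  finally show ?thesis
    by (simp add: fps_compose_add_distrib)
qed

lemma fps_coeff_compose_linear:
  fixes F :: "'a::comm_ring_1 fps"
  shows "fps_coeff (F oo (fps_const c * fps_X)) n = c ^ nat n * fps_coeff F n"
  by (simp add: fps_coeff_def)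

lemma fps_coeff_mult_linear:
  fixes F :: "'a::comm_ring_1 fps"
  shows "fps_coeff (F * (1 + fps_const b * fps_X)) n = fps_coeff F n + b * fps_coeff F (n - 1)"
  by (simp add: fps_coeff_def fps_nth_mult_linear nat_diff_distrib)

lemma fps_coeff_mult:
  fixes F G :: "'a::comm_ring_1 fps"
  assumes "\<And>j. n \<le> j \<Longrightarrow> fps_nth G j = 0"
  shows "fps_coeff (F * G) m = (\<Sum>j<n. fps_coeff F (m - int j) * fps_nth G j)"
proof (cases "m < 0")
  case False
  then obtain k where m: "m = int k" by (metis nonneg_int_cases not_less)
  have "fps_coeff (F * G) m = (\<Sum>j=0..k. fps_coeff F (m - int j) * fps_nth G j)"
    unfolding m fps_coeff_def fps_mult_nth
    by (subst sum.atLeastAtMost_rev) (auto simp: nat_diff_distrib intro!: sum.cong)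
  also have "\<dots> = (\<Sum>j<k + 1 + n. fps_coeff F (m - int j) * fps_nth G j)"
    by (rule sum.mono_neutral_left) (auto simp: fps_coeff_def m)
  also have "\<dots> = (\<Sum>j<n. fps_coeff F (m - int j) * fps_nth G j)"
    by (rule sum.mono_neutral_right) (auto simp: assms)
  finally show ?thesis .
qed (simp add: fps_coeff_def)

section \<open>Determinants\<close>

lemma det_mat_diag: "det (mat_diag n f) = (\<Prod>i<n. f i)"
  unfolding mat_diag_def
  by (subst det_upper_triangular[of _ n])
    (auto simp: upper_triangular_def prod_list_diag_prod atLeast0LessThan)

lemma det_scale_rows:
  fixes s :: "nat \<Rightarrow> 'a::comm_ring_1"
  shows "det (mat n n (\<lambda>(i, j). s i * f i j)) = (\<Prod>i<n. s i) * det (mat n n (\<lambda>(i, j). f i j))"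
proof -
  have "mat n n (\<lambda>(i, j). s i * f i j) = mat_diag n s * mat n n (\<lambda>(i, j). f i j)"
    by (subst mat_diag_mult_left[of _ n n]) auto
  then show ?thesis by (simp add: det_mult[of _ n] det_mat_diag)
qed

lemma det_multcol:
  fixes A :: "'a::comm_ring_1 mat"
  assumes "A \<in> carrier_mat n n" and "k < n"
  shows "det (multcol k a A) = a * det A"
  using assms by (simp add: multcol_mat det_mult[of _ n] det_multrow_mat)

lemma det_fps_coeff_mult_triangular:
  fixes F :: "'a::comm_ring_1 fps" and Q :: "nat \<Rightarrow> 'a fps" and e :: "nat \<Rightarrow> int"
  assumes deg: "\<And>d j. d < j \<Longrightarrow> fps_nth (Q d) j = 0"
  shows "det (mat n n (\<lambda>(r, c). fps_coeff (F * Q (n - 1 - c)) (e r)))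
       = det (mat n n (\<lambda>(r, k). fps_coeff F (e r - int (n - 1 - k)))) * (\<Prod>d<n. fps_nth (Q d) d)"
proof -
  define A where "A = mat n n (\<lambda>(r, k). fps_coeff F (e r - int (n - 1 - k)))"
  define U where "U = mat n n (\<lambda>(k, c). fps_nth (Q (n - 1 - c)) (n - 1 - k))"
  have "mat n n (\<lambda>(r, c). fps_coeff (F * Q (n - 1 - c)) (e r)) = A * U"
  proof (rule eq_matI)
    fix r c assume "r < dim_row (A * U)" "c < dim_col (A * U)"
    then have r: "r < n" and c: "c < n" by (simp_all add: A_def U_def)
    have "(A * U) $$ (r, c)
        = (\<Sum>k<n. fps_coeff F (e r - int (n - Suc k)) * fps_nth (Q (n - 1 - c)) (n - Suc k))"
      using r c by (simp add: A_def U_def scalar_prod_def lessThan_atLeast0)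
    also have "\<dots> = (\<Sum>j<n. fps_coeff F (e r - int j) * fps_nth (Q (n - 1 - c)) j)"
      by (rule sum.nat_diff_reindex)
    also have "\<dots> = fps_coeff (F * Q (n - 1 - c)) (e r)"
      by (intro fps_coeff_mult[symmetric] deg) (use c in linarith)
    finally show "mat n n (\<lambda>(r, c). fps_coeff (F * Q (n - 1 - c)) (e r)) $$ (r, c) = (A * U) $$ (r, c)"
      using r c by simp
  qed (simp_all add: A_def U_def)
  moreover have "det U = (\<Prod>d<n. fps_nth (Q d) d)"
  proof -
    have "det U = (\<Prod>c<n. fps_nth (Q (n - 1 - c)) (n - 1 - c))"
      unfolding U_def
      by (subst det_lower_triangular[of n]) (auto simp: deg prod_list_diag_prod atLeast0LessThan)
    also have "\<dots> = (\<Prod>d<n. fps_nth (Q d) d)"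
      using prod.nat_diff_reindex[of "\<lambda>d. fps_nth (Q d) d" n] by simp
    finally show ?thesis .
  qed
  ultimately show ?thesis
    by (simp add: det_mult[of _ n] A_def U_def)
qed

lemma choose_three: "n choose 3 = n * (n - 1) * (n - 2) div 6"
proof (cases "n \<ge> 3")
  case True
  define m where "m = n - 3"
  with True have n: "n = Suc (Suc (Suc m))"
    by simp
  have "fact n = n * (n - 1) * (n - 2) * fact (n - 3)"
    unfolding n numeral_3_eq_3 numeral_2_eq_2
    by (simp only: fact_Suc diff_Suc_1 diff_Suc_Suc diff_zero mult.assoc of_nat_id)
  moreover have "fact 3 = (6::nat)"
    by (simp add: numeral_3_eq_3)
  ultimately show ?thesis
    using binomial_fact'[OF True] by simp
next
  case False
  then have "n = 0 \<or> n = 1 \<or> n = 2" by auto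
  then show ?thesis by (auto simp: numeral_3_eq_3)
qed

lemma prod_lessThan_geometric:
  fixes c q :: "'a::comm_monoid_mult"
  shows "(\<Prod>i<k. c * q ^ i) = c ^ k * q ^ (k choose 2)"
  by (induction k) (simp_all add: numeral_2_eq_2 power_add mult_ac)

lemma prod_lessThan_triangle:
  fixes c q :: "'a::comm_monoid_mult"
  shows "(\<Prod>k<n. \<Prod>i<k. c * q ^ i) = c ^ (n choose 2) * q ^ (n choose 3)"
  by (induction n)
    (simp_all add: prod_lessThan_geometric numeral_2_eq_2 numeral_3_eq_3 power_add mult_ac)

lemma prod_lessThan_odd_powers:
  fixes q :: "'a::comm_monoid_mult"
  shows "(\<Prod>r<n. q ^ (2 * (n - 1 - r) + 1)) = q ^ (n * n)"
proof -
  have "(\<Prod>r<n. q ^ (2 * (n - 1 - r) + 1)) = (\<Prod>k<n. q ^ (2 * k + 1))"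
    using prod.nat_diff_reindex[of "\<lambda>k. q ^ (2 * k + 1)" n] by simp
  also have "\<dots> = q ^ (\<Sum>k<n. 2 * k + 1)"
    by (rule power_sum[symmetric])
  also have "(\<Sum>k<n. 2 * k + 1) = n * n"
    by (induction n) simp_all
  finally show ?thesis .
qed

lemma prefactor_scaled_last_column:
  fixes q z :: complex
  assumes "q \<noteq> 0"
  shows "q ^ (Suc n * Suc n) * (((1 - q) / q) ^ n * (((q - 1) * z) ^ (n choose 2) * q ^ (n choose 3)))
       = (- 1) ^ n * (q - 1) ^ (Suc n * n div 2) * z ^ (n * (n - 1) div 2)
         * q ^ (Suc n * (Suc n ^ 2 + 5) div 6)"
proof -
  have exponent_q_minus_1: "Suc n * n div 2 = n + (n choose 2)"
    using choose_two[of "Suc n"] by (simp add: numeral_2_eq_2)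
  have exponent_q: "Suc n * (Suc n ^ 2 + 5) div 6 = (n * n + n + 1) + (n choose 3)"
  proof -
    have "Suc n * (Suc n ^ 2 + 5) = n * (n - 1) * (n - 2) + 6 * (n * n + n + 1)"
    proof (cases "n \<ge> 2")
      case True
      define k where "k = n - 2"
      with True have "n = k + 2" by simp
      then show ?thesis by (simp add: power2_eq_square algebra_simps)
    next
      case False
      then have "n = 0 \<or> n = 1" by auto
      then show ?thesis by (auto simp: power2_eq_square)
    qed
    then show ?thesis by (simp add: choose_three)
  qed
  have leading: "q ^ (Suc n * Suc n) * ((1 - q) / q) ^ n = (- 1) ^ n * (q - 1) ^ n * q ^ (n * n + n + 1)"
  proof -
    have "Suc n * Suc n = (n * n + n + 1) + n" by simp
    then have "q ^ (Suc n * Suc n) * ((1 - q) / q) ^ n = (1 - q) ^ n * q ^ (n * n + n + 1)"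
      using assms by (simp add: power_add power_divide)
    also have "(1 - q) ^ n = (- 1) ^ n * (q - 1) ^ n"
      by (simp flip: power_mult_distrib)
    finally show ?thesis .
  qed
  have "q ^ (Suc n * Suc n) * (((1 - q) / q) ^ n * (((q - 1) * z) ^ (n choose 2) * q ^ (n choose 3)))
      = (- 1) ^ n * (q - 1) ^ n * q ^ (n * n + n + 1)
        * ((q - 1) ^ (n choose 2) * z ^ (n choose 2) * q ^ (n choose 3))"
    unfolding leading[symmetric] power_mult_distrib by (simp only: mult.assoc)
  also have "\<dots> = (- 1) ^ n * (q - 1) ^ (Suc n * n div 2) * z ^ (n * (n - 1) div 2)
         * q ^ (Suc n * (Suc n ^ 2 + 5) div 6)"
    unfolding exponent_q_minus_1 exponent_q choose_two[symmetric] power_add by (simp only: mult_ac)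
  finally show ?thesis .
qed

section \<open>The generating series of the polynomials \<open>p\<^sub>n\<close>\<close>

lemma qpoch_Suc: "qpoch q (Suc n) = qpoch q n * (1 - q ^ Suc n)"
  unfolding qpoch_def by simp

lemma qpoch_nonzero:
  assumes "\<forall>n>0. q ^ n \<noteq> 1"
  shows "qpoch q n \<noteq> 0"
  using assms unfolding qpoch_def by (auto simp: prod_zero_iff)

text \<open>The expansions of \<open>1 / (x t; q)\<^sub>\<infinity>\<close> and \<open>(- x t; q)\<^sub>\<infinity>\<close>.\<close>

definition qexp_fps :: "complex \<Rightarrow> complex \<Rightarrow> complex fps" where
  "qexp_fps q x = Abs_fps (\<lambda>n. x ^ n / qpoch q n)"

definition qExp_fps :: "complex \<Rightarrow> complex \<Rightarrow> complex fps" where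
  "qExp_fps q x = Abs_fps (\<lambda>n. q ^ (n * (n - 1) div 2) * x ^ n / qpoch q n)"

lemma qexp_fps_compose_linear:
  "qexp_fps q x oo (fps_const c * fps_X) = qexp_fps q (c * x)"
  unfolding qexp_fps_def fps_compose_linear by (simp add: power_mult_distrib)

lemma qExp_fps_compose_linear:
  "qExp_fps q x oo (fps_const c * fps_X) = qExp_fps q (c * x)"
  unfolding qExp_fps_def fps_compose_linear by (simp add: power_mult_distrib mult_ac)

lemma qexp_fps_mult_q:
  assumes "\<forall>n>0. q ^ n \<noteq> 1"
  shows "qexp_fps q (q * x) = qexp_fps q x * (1 + fps_const (- x) * fps_X)"
proof (rule fps_ext)
  fix n
  show "fps_nth (qexp_fps q (q * x)) n = fps_nth (qexp_fps q x * (1 + fps_const (- x) * fps_X)) n"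
  proof (cases n)
    case (Suc m)
    have "qpoch q m \<noteq> 0" "1 - q ^ Suc m \<noteq> 0"
      using qpoch_nonzero[OF assms] assms by auto
    then show ?thesis
      unfolding Suc fps_nth_mult_linear qexp_fps_def
      by (simp add: qpoch_Suc field_simps power_mult_distrib)
  qed (simp add: qexp_fps_def fps_nth_mult_linear)
qed

lemma qExp_fps_mult_q:
  assumes "\<forall>n>0. q ^ n \<noteq> 1"
  shows "qExp_fps q x = qExp_fps q (q * x) * (1 + fps_const x * fps_X)"
proof (rule fps_ext)
  fix n
  show "fps_nth (qExp_fps q x) n = fps_nth (qExp_fps q (q * x) * (1 + fps_const x * fps_X)) n"
  proof (cases n)
    case (Suc m)
    have "qpoch q m \<noteq> 0" "1 - q ^ Suc m \<noteq> 0"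
      using qpoch_nonzero[OF assms] assms by auto
    moreover have "Suc m * m div 2 = m + m * (m - 1) div 2"
      by (cases m) simp_all
    ultimately show ?thesis
      unfolding Suc fps_nth_mult_linear qExp_fps_def
      by (simp add: qpoch_Suc field_simps power_mult_distrib power_add)
  qed (simp add: qExp_fps_def fps_nth_mult_linear)
qed

definition p_fps :: "complex \<Rightarrow> complex \<Rightarrow> complex \<Rightarrow> complex fps" where
  "p_fps q y z = qexp_fps q ((1 - q) * y) * (qexp_fps q ((1 - q) * z) * qExp_fps q (1 - q))"

lemma pnat_eq_fps_nth: "pnat q n y z = fps_nth (p_fps q y z) n"
proof -
  have powers: "(1 - q) ^ a * ((1 - q) ^ b * ((1 - q) ^ (n - (a + b)) * w)) = (1 - q) ^ n * w"
    if "a + b \<le> n" for a b and w :: complex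
    using that by (simp flip: power_add)
  show ?thesis
    unfolding pnat_def p_fps_def qexp_fps_def qExp_fps_def
    by (simp add: fps_mult_nth atMost_atLeast0 sum_distrib_left power_mult_distrib mult_ac diff_diff_add)
      (intro sum.cong refl, simp add: powers)
qed

lemma p_eq_fps_coeff: "p q n y z = fps_coeff (p_fps q y z) n"
  by (simp add: p_def fps_coeff_def pnat_eq_fps_nth)

lemma phi_eq_det_fps_coeff:
  "phi q N y z
   = det (mat N N (\<lambda>(r, k). fps_coeff (p_fps q y z) (2 * (int N - 1 - int r) + 1 - int (N - 1 - k))))"
  unfolding phi_def
  by (rule arg_cong[of _ _ det], rule eq_matI) (auto simp: p_eq_fps_coeff of_nat_diff algebra_simps)

lemma p_fps_z_times_q:
  assumes "\<forall>n>0. q ^ n \<noteq> 1"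
  shows "p_fps q y (q * w) = p_fps q y w * (1 + fps_const ((q - 1) * w) * fps_X)"
proof -
  have "qexp_fps q ((1 - q) * (q * w))
      = qexp_fps q ((1 - q) * w) * (1 + fps_const ((q - 1) * w) * fps_X)"
    using qexp_fps_mult_q[OF assms, of "(1 - q) * w"] by (simp add: algebra_simps)
  then show ?thesis unfolding p_fps_def by (simp add: ac_simps)
qed

lemma p_fps_z_times_q_power:
  assumes "\<forall>n>0. q ^ n \<noteq> 1"
  shows "p_fps q y (q ^ m * z)
       = p_fps q y z * (\<Prod>i<m. 1 + fps_const ((q - 1) * z * q ^ i) * fps_X)"
proof (induction m)
  case (Suc m)
  have "p_fps q y (q ^ Suc m * z) = p_fps q y (q * (q ^ m * z))"
    by (simp add: mult_ac)
  then show ?case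
    unfolding p_fps_z_times_q[OF assms] Suc.IH by (simp add: mult_ac)
qed simp

lemma p_fps_times_q:
  assumes "q \<noteq> 0" and "\<forall>n>0. q ^ n \<noteq> 1"
  shows "p_fps q (q * y) (q * z)
       = (p_fps q y z * (1 + fps_const ((1 - q) / q) * fps_X)) oo (fps_const q * fps_X)"
proof -
  have X0: "fps_nth (fps_const q * fps_X) 0 = 0" by simp
  have "(p_fps q y z * (1 + fps_const ((1 - q) / q) * fps_X)) oo (fps_const q * fps_X)
      = qexp_fps q (q * ((1 - q) * y)) * (qexp_fps q (q * ((1 - q) * z)) * qExp_fps q (q * (1 - q)))
        * (1 + fps_const (1 - q) * fps_X)"
    unfolding p_fps_def fps_compose_mult_distrib[OF X0] qexp_fps_compose_linear
      qExp_fps_compose_linear fps_compose_linear_factor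
    using assms(1) by simp
  also have "\<dots> = p_fps q (q * y) (q * z)"
    unfolding p_fps_def qExp_fps_mult_q[OF assms(2), of "1 - q"] by (simp add: ac_simps)
  finally show ?thesis ..
qed

lemma p_times_q_eq_fps_coeff:
  assumes "q \<noteq> 0" and "\<forall>n>0. q ^ n \<noteq> 1"
  shows "p q k (q * x) (q ^ Suc m * z)
       = q ^ nat k * fps_coeff (p_fps q x z * ((\<Prod>i<m. 1 + fps_const ((q - 1) * z * q ^ i) * fps_X)
                                              * (1 + fps_const ((1 - q) / q) * fps_X))) k"
proof -
  have shift: "q ^ Suc m * z = q * (q ^ m * z)" by simp
  show ?thesis
    unfolding shift p_eq_fps_coeff p_fps_times_q[OF assms] fps_coeff_compose_linear
      p_fps_z_times_q_power[OF assms(2)]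
    by (simp add: mult.assoc)
qed

text \<open>This expresses the last column of the third determinant through the last two columns of the
  second one.\<close>

lemma p_contiguous:
  assumes "q \<noteq> 0" and "\<forall>n>0. q ^ n \<noteq> 1"
  shows "q ^ n * p q (int n) x (q * z)
       = (1 + q * z) * (q ^ n * p q (int n) x z) - q * z * p q (int n) (q * x) (q * z)"
proof -
  define P where "P = fps_coeff (p_fps q x z)"
  have base: "p q (int n) x z = P n"
    unfolding P_def p_eq_fps_coeff ..
  have z_shift: "p q (int n) x (q * z) = P n + (q - 1) * z * P (int n - 1)"
    unfolding P_def p_eq_fps_coeff p_fps_z_times_q[OF assms(2)] fps_coeff_mult_linear ..
  have scale: "p q (int n) (q * x) (q * z) = q ^ n * (P n + (1 - q) / q * P (int n - 1))"
    unfolding P_def p_eq_fps_coeff p_fps_times_q[OF assms] fps_coeff_compose_linear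
      fps_coeff_mult_linear by simp
  show ?thesis
  proof (cases n)
    case 0
    then have "P (int n - 1) = 0" by (simp add: P_def fps_coeff_def)
    then show ?thesis unfolding base z_shift scale by (simp add: algebra_simps)
  next
    case (Suc m)
    then show ?thesis unfolding base z_shift scale using assms(1) by (simp add: field_simps)
  qed
qed

section \<open>The three determinants\<close>

lemma det_z_shifted_columns:
  assumes "\<forall>n>0. q ^ n \<noteq> 1"
  shows "det (mat N N (\<lambda>(r, c). p q (2 * (int N - 1 - int r) + 1) y (q ^ (N - 1 - c) * z)))
       = (q - 1) ^ (N * (N - 1) div 2) * z ^ (N * (N - 1) div 2) * q ^ ((N - 2) * (N - 1) * N div 6)
         * phi q N y z"
proof -
  define Q where "Q d = (\<Prod>i<d. 1 + fps_const ((q - 1) * z * q ^ i) * fps_X)" for d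
  have "mat N N (\<lambda>(r, c). p q (2 * (int N - 1 - int r) + 1) y (q ^ (N - 1 - c) * z))
      = mat N N (\<lambda>(r, c). fps_coeff (p_fps q y z * Q (N - 1 - c)) (2 * (int N - 1 - int r) + 1))"
    by (rule eq_matI) (simp_all add: p_eq_fps_coeff p_fps_z_times_q_power[OF assms] Q_def)
  also have "det \<dots> = phi q N y z * (\<Prod>d<N. fps_nth (Q d) d)"
    by (subst det_fps_coeff_mult_triangular)
      (simp_all add: Q_def fps_nth_prod_linear_factors_above phi_eq_det_fps_coeff)
  also have "(\<Prod>d<N. fps_nth (Q d) d) = (\<Prod>d<N. \<Prod>i<d. (q - 1) * z * q ^ i)"
    by (simp add: Q_def fps_nth_prod_linear_factors_top)
  also have "(\<Prod>d<N. \<Prod>i<d. (q - 1) * z * q ^ i) = ((q - 1) * z) ^ (N choose 2) * q ^ (N choose 3)"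
    by (rule prod_lessThan_triangle)
  finally show ?thesis
    by (simp add: choose_two choose_three power_mult_distrib mult_ac)
qed

lemma det_scaled_last_column:
  assumes "q \<noteq> 0" and "\<forall>n>0. q ^ n \<noteq> 1" and "N \<ge> 1"
  shows "det (mat N N (\<lambda>(r, c). if c < N - 1
            then p q (2 * (int N - 1 - int r) + 1) (q * x) (q ^ (N - 1 - c) * z)
            else q ^ (2 * (N - 1 - r) + 1) * p q (2 * (int N - 1 - int r) + 1) x z))
       = (- 1) ^ (N - 1) * (q - 1) ^ (N * (N - 1) div 2) * z ^ ((N - 1) * (N - 2) div 2)
         * q ^ (N * (N ^ 2 + 5) div 6) * phi q N x z"
    (is "det ?M = _")
proof -
  define n where "n = N - 1"
  have N: "N = Suc n" using assms(3) by (simp add: n_def)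
  define Q where "Q d = (case d of 0 \<Rightarrow> 1
    | Suc m \<Rightarrow> (\<Prod>i<m. 1 + fps_const ((q - 1) * z * q ^ i) * fps_X)
               * (1 + fps_const ((1 - q) / q) * fps_X))" for d
  have "?M = mat N N (\<lambda>(r, c). q ^ (2 * (N - 1 - r) + 1)
                       * fps_coeff (p_fps q x z * Q (N - 1 - c)) (2 * (int N - 1 - int r) + 1))"
    (is "_ = ?C")
  proof (rule eq_matI)
    fix r c assume "r < dim_row ?C" and "c < dim_col ?C"
    then have r: "r < N" and c: "c < N" by simp_all
    have "nat (2 * (int N - 1 - int r) + 1) = 2 * (N - 1 - r) + 1"
      using r by simp
    moreover have "N - 1 - c = Suc (N - 2 - c)" if "c < N - 1"
      using that by simp
    ultimately show "?M $$ (r, c) = ?C $$ (r, c)"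
      using r c p_times_q_eq_fps_coeff[OF assms(1,2), of _ x "N - 2 - c" z]
      by (auto simp: Q_def p_eq_fps_coeff)
  qed simp_all
  also have "det ?C = q ^ (N * N) * (phi q N x z * (\<Prod>d<N. fps_nth (Q d) d))"
  proof -
    have deg: "fps_nth (Q d) j = 0" if "d < j" for d j
      using that by (auto simp: Q_def fps_nth_mult_linear fps_nth_prod_linear_factors_above
          split: nat.split)
    show ?thesis
      by (subst det_scale_rows, subst det_fps_coeff_mult_triangular)
        (simp_all only: deg prod_lessThan_odd_powers phi_eq_det_fps_coeff)
  qed
  also have "(\<Prod>d<N. fps_nth (Q d) d) = ((1 - q) / q) ^ n * (\<Prod>d<n. \<Prod>i<d. (q - 1) * z * q ^ i)"
  proof -
    have top: "fps_nth (Q (Suc d)) (Suc d) = (1 - q) / q * (\<Prod>i<d. (q - 1) * z * q ^ i)" for d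
      by (simp add: Q_def fps_nth_mult_linear fps_nth_prod_linear_factors_above
          fps_nth_prod_linear_factors_top)
    have "(\<Prod>d<N. fps_nth (Q d) d) = (\<Prod>d<n. fps_nth (Q (Suc d)) (Suc d))"
      unfolding N prod.lessThan_Suc_shift by (simp add: Q_def)
    also have "\<dots> = ((1 - q) / q) ^ n * (\<Prod>d<n. \<Prod>i<d. (q - 1) * z * q ^ i)"
      by (simp only: top prod.distrib prod_constant card_lessThan)
    finally show ?thesis .
  qed
  also have "(\<Prod>d<n. \<Prod>i<d. (q - 1) * z * q ^ i) = ((q - 1) * z) ^ (n choose 2) * q ^ (n choose 3)"
    by (rule prod_lessThan_triangle)
  finally show ?thesis
    using prefactor_scaled_last_column[OF assms(1), of n z] by (simp add: N mult_ac)
qed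

lemma det_scaled_shifted_last_column:
  assumes "q \<noteq> 0" and "\<forall>n>0. q ^ n \<noteq> 1" and "N \<ge> 2"
  shows "det (mat N N (\<lambda>(r, c). if c < N - 1
            then p q (2 * (int N - 1 - int r) + 1) (q * x) (q ^ (N - 1 - c) * z)
            else q ^ (2 * (N - 1 - r) + 1) * p q (2 * (int N - 1 - int r) + 1) x (q * z)))
       = (- 1) ^ (N - 1) * (q - 1) ^ (N * (N - 1) div 2) * z ^ ((N - 1) * (N - 2) div 2)
         * q ^ (N * (N ^ 2 + 5) div 6) * (1 + q * z) * phi q N x z"
    (is "det ?M' = _")
proof -
  define M where "M = mat N N (\<lambda>(r, c). if c < N - 1
            then p q (2 * (int N - 1 - int r) + 1) (q * x) (q ^ (N - 1 - c) * z)
            else q ^ (2 * (N - 1 - r) + 1) * p q (2 * (int N - 1 - int r) + 1) x z)"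
  have M: "M \<in> carrier_mat N N" by (simp add: M_def)
  have "?M' = addcol (- (q * z)) (N - 1) (N - 2) (multcol (N - 1) (1 + q * z) M)"
    (is "_ = ?C")
  proof (rule eq_matI)
    fix r c assume "r < dim_row ?C" and "c < dim_col ?C"
    then have r: "r < N" and c: "c < N" by (simp_all add: M_def)
    have "int (2 * (N - 1 - r) + 1) = 2 * (int N - 1 - int r) + 1"
      using r by (simp add: of_nat_diff)
    then show "?M' $$ (r, c) = ?C $$ (r, c)"
      using r c assms(3) p_contiguous[OF assms(1,2), of "2 * (N - 1 - r) + 1" x z]
      by (auto simp: M_def)
  qed (simp_all add: M_def)
  also have "det ?C = det (multcol (N - 1) (1 + q * z) M)"
    using M assms(3) by (intro det_addcol[where n = N]) auto
  also have "\<dots> = (1 + q * z) * det M"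
    using M assms(3) by (simp add: det_multcol)
  finally show ?thesis
    using det_scaled_last_column[OF assms(1,2), of N x z] assms(3) by (simp add: M_def mult_ac)
qed

theorem lemma2:
  fixes q y z :: complex and N :: nat
  assumes q0: "q \<noteq> 0"
    and qnr: "\<forall>n::nat. n > 0 \<longrightarrow> q ^ n \<noteq> 1"
    and N2: "N \<ge> 2"
  shows
   "(det (mat N N (\<lambda>(r, c). p q (2 * (int N - 1 - int r) + 1) y (q ^ (N - 1 - c) * z)))
      = (q - 1) ^ (N * (N - 1) div 2) * z ^ (N * (N - 1) div 2)
        * q ^ ((N - 2) * (N - 1) * N div 6) * phi q N y z)
   \<and> (det (mat N N (\<lambda>(r, c). if c < N - 1
            then p q (2 * (int N - 1 - int r) + 1) y (q ^ (N - 1 - c) * z)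
            else q ^ (2 * (N - 1 - r) + 1) * p q (2 * (int N - 1 - int r) + 1) (y / q) z))
      = (- 1) ^ (N - 1) * (q - 1) ^ (N * (N - 1) div 2) * z ^ ((N - 1) * (N - 2) div 2)
        * q ^ (N * (N ^ 2 + 5) div 6) * phi q N (y / q) z)
   \<and> (det (mat N N (\<lambda>(r, c). if c < N - 1
            then p q (2 * (int N - 1 - int r) + 1) y (q ^ (N - 1 - c) * z)
            else q ^ (2 * (N - 1 - r) + 1) * p q (2 * (int N - 1 - int r) + 1) (y / q) (q * z)))
      = (- 1) ^ (N - 1) * (q - 1) ^ (N * (N - 1) div 2) * z ^ ((N - 1) * (N - 2) div 2)
        * q ^ (N * (N ^ 2 + 5) div 6) * (1 + q * z) * phi q N (y / q) z)"
proof -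
  have N1: "N \<ge> 1" using N2 by simp
  have y: "q * (y / q) = y" using q0 by simp
  show ?thesis
    using det_z_shifted_columns[OF qnr, of N y z]
      det_scaled_last_column[OF q0 qnr N1, of "y / q" z]
      det_scaled_shifted_last_column[OF q0 qnr N2, of "y / q" z]
    unfolding y by blast
qed

end
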